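(* Let $n \geq 2$ be an integer and let $T_n=\{(1\,2),(1\,3),\dots,(1\,n)\} \subseteq S_n$. For each integer $1 \leq \ell \leq n-1$, both $n-\ell$ and $-(n-\ell)$ are eigenvalues of the Cayley graph $X(S_n,T_n)$, each with multiplicity at least $\binom{n-2}{\ell-1}$. If $n\ge 4$, then $0$ is an eigenvalue of $X(S_n,T_n)$ with multiplicity at least $\binom{n-1}{2}$.
   Context: For a group $G$ and an inverse-closed subset $T\subseteq G$, the Cayley graph $X(G,T)$ is the (undirected) graph with vertex set $G$ and an edge $\{g,tg\}$ for each $g\in G$ and $t\in T$. The spectrum/eigenvalues of a graph are those of its adjacency matrix. $S_n$ is the symmetric group on $[n]=\{1,\dots,n\}$. *)

theory Defs
  imports "Jordan_Normal_Form.Char_Poly" "HOL-Combinatorics.Transposition" "HOL-Combinatorics.Permutations"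
begin

definition Sym :: "nat \<Rightarrow> (nat \<Rightarrow> nat) set" where
  "Sym n = {p. p permutes {1..n}}"

definition star_transp :: "nat \<Rightarrow> (nat \<Rightarrow> nat) set" where
  "star_transp n = {transpose 1 k | k. k \<in> {2..n}}"

definition vertex_enum :: "'a set \<Rightarrow> 'a list" where
  "vertex_enum V = (SOME vs. distinct vs \<and> set vs = V)"

text \<open>Adjacency matrix of the Cayley graph X(G,T): vertex set G, edge {g, t g} for g in G, t in T.
  Rows/columns are indexed by the enumeration of G; the spectrum does not depend on it.\<close>
definition cayley_adj_mat :: "('a \<Rightarrow> 'a) set \<Rightarrow> ('a \<Rightarrow> 'a) set \<Rightarrow> real mat" where
  "cayley_adj_mat G T = (let vs = vertex_enum G in
     mat (length vs) (length vs) (\<lambda>(i, j). if \<exists>t\<in>T. vs ! j = t \<circ> (vs ! i) then 1 else 0))"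

definition eig_mult :: "real mat \<Rightarrow> real \<Rightarrow> nat" where
  "eig_mult A x = order x (char_poly A)"

end

theory Submission
  imports Defs "Jordan_Normal_Form.Jordan_Normal_Form_Uniqueness" "Jordan_Normal_Form.Jordan_Normal_Form_Existence"
begin

(*
  A lower bound on an algebraic multiplicity is obtained by exhibiting
  many eigenvectors together with a "dual family" of functionals that detects them
  individually (functional i is nonzero on eigenvector j exactly when i = j): such
  eigenvectors are linearly independent, so their number is at most the geometric
  and hence the algebraic multiplicity.  For the Cayley graph an eigenvector is a
  function phi on S_n with  sum_{k=2..n} phi((1 k) o g) = lambda * phi g.

  For 1 <= l <= n-1 and every (l-1)-subset S of {3..n} the function phi_S(g), the
  determinant of the pattern matrix recording where g sends 1..l-1 inside {2} u S
  (with a row of ones on top), is an eigenfunction for n-l; twisting it by the sign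
  character gives one for -(n-l).  Point evaluations at suitable permutations form
  the dual family, giving C(n-2, l-1) for both.  For n >= 4 and p, u in {2..n-1} an
  explicit function of the image of {1,p} under g is an eigenfunction for 0, and
  differences of point evaluations separate these (n-2)^2 >= C(n-1,2) functions.
*)

section \<open>Multiplicity bounds from eigenvectors with a dual family\<close>

text \<open>Vectors in a kernel that are separated by a dual family of functionals are
  linearly independent, so their number bounds the kernel dimension.\<close>
lemma card_le_kernel_dim_by_dual_family:
  fixes C :: "'a :: field mat" and v :: "'i \<Rightarrow> 'a vec" and w :: "'i \<Rightarrow> nat \<Rightarrow> 'a"
  assumes C: "C \<in> carrier_mat N N" and finI: "finite I"
    and ker: "\<And>i. i \<in> I \<Longrightarrow> v i \<in> mat_kernel C"
    and dual: "\<And>i j. i \<in> I \<Longrightarrow> j \<in> I \<Longrightarrow> (\<Sum>k<N. w i k * v j $ k) \<noteq> 0 \<longleftrightarrow> i = j"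
  shows "card I \<le> kernel_dim C"
proof -
  interpret K: kernel N N C by (unfold_locales, rule C)
  have inj: "inj_on v I"
  proof (rule inj_onI)
    fix i j assume i: "i \<in> I" and j: "j \<in> I" and e: "v i = v j"
    from dual[OF i i] e dual[OF i j] show "i = j" by auto
  qed
  let ?S = "v ` I"
  have Sk: "?S \<subseteq> mat_kernel C" using ker by auto
  have li: "K.lin_indpt ?S"
  proof (rule K.Ker.finite_lin_indpt2)
    show "finite ?S" using finI by simp
    show "?S \<subseteq> mat_kernel C" by (rule Sk)
    fix a assume "a \<in> ?S \<rightarrow> UNIV" and lc: "K.lincomb a ?S = 0\<^sub>v N"
    show "\<forall>x\<in>?S. a x = 0"
    proof
      fix x assume "x \<in> ?S"
      then obtain i where i: "i \<in> I" and x: "x = v i" by auto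
      have "0 = (\<Sum>k<N. w i k * K.lincomb a ?S $ k)" unfolding lc by simp
      also have "\<dots> = (\<Sum>k<N. w i k * (\<Sum>y\<in>?S. a y * y $ k))"
        by (rule sum.cong[OF refl], subst K.lincomb_index[OF _ Sk], auto)
      also have "\<dots> = (\<Sum>y\<in>?S. a y * (\<Sum>k<N. w i k * y $ k))"
        by (simp add: sum_distrib_left sum_distrib_right mult.assoc mult.left_commute
            sum.swap[of _ "{..<N}"])
      also have "\<dots> = (\<Sum>j\<in>I. a (v j) * (\<Sum>k<N. w i k * v j $ k))"
        by (subst sum.reindex[OF inj], simp)
      also have "\<dots> = a (v i) * (\<Sum>k<N. w i k * v i $ k)"
        by (subst sum.remove[OF finI i], subst sum.neutral, insert dual[OF i], auto)
      finally show "a x = 0" using dual[OF i i] x by simp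
    qed
  qed
  obtain B where "finite B" "kernel.basis N C B" using kernel_basis_exists[OF C] by auto
  hence fd: "K.Ker.fin_dim" unfolding K.Ker.fin_dim_def K.Ker.basis_def by auto
  have "card I = card ?S" using card_image[OF inj] by simp
  also have "\<dots> \<le> K.Ker.dim" using K.Ker.li_le_dim(2)[OF fd Sk li] .
  finally show ?thesis by simp
qed

text \<open>Geometric multiplicity is at most algebraic multiplicity; over the complex
  numbers this is read off from the Jordan normal form.\<close>
lemma geometric_le_algebraic_multiplicity:
  fixes A :: "complex mat"
  assumes A: "A \<in> carrier_mat N N"
  shows "kernel_dim (char_matrix A ev) \<le> Polynomial.order ev (char_poly A)"
proof -
  have sum_min1_le: "(\<Sum>n\<leftarrow>xs. min (1::nat) n) \<le> sum_list xs" for xs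
    by (induct xs) auto
  from char_poly_factorized[OF A] obtain as where "char_poly A = (\<Prod>a\<leftarrow>as. [:- a, 1:])"
    by auto
  from jordan_nf_exists[OF A this] obtain n_as where jnf: "jordan_nf A n_as" by auto
  have "kernel_dim (char_matrix A ev) = dim_gen_eigenspace A ev 1"
    unfolding dim_gen_eigenspace_def using A by simp
  also have "\<dots> \<le> Polynomial.order ev (char_poly A)"
    unfolding dim_gen_eigenspace[OF jnf] jordan_nf_order[OF jnf]
    using sum_min1_le[of "map fst (filter (\<lambda>na. snd na = ev) n_as)"]
    by (simp add: case_prod_unfold)
  finally show ?thesis .
qed

lemma card_le_order_by_dual_family_complex:
  fixes A :: "complex mat" and v :: "'i \<Rightarrow> complex vec"
  assumes A: "A \<in> carrier_mat N N" and finI: "finite I"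
    and vc: "\<And>i. i \<in> I \<Longrightarrow> v i \<in> carrier_vec N"
    and ve: "\<And>i. i \<in> I \<Longrightarrow> A *\<^sub>v v i = ev \<cdot>\<^sub>v v i"
    and dual: "\<And>i j. i \<in> I \<Longrightarrow> j \<in> I \<Longrightarrow> (\<Sum>k<N. w i k * v j $ k) \<noteq> 0 \<longleftrightarrow> i = j"
  shows "card I \<le> Polynomial.order ev (char_poly A)"
proof -
  let ?C = "char_matrix A ev"
  have C: "?C \<in> carrier_mat N N" using A by simp
  have "v i \<in> mat_kernel ?C" if i: "i \<in> I" for i
  proof (rule mat_kernelI[OF C vc[OF i]])
    have "?C *\<^sub>v v i = A *\<^sub>v v i + (-ev) \<cdot>\<^sub>v v i"
      unfolding char_matrix_def using A vc[OF i]
      by (intro eq_vecI, auto simp: add_scalar_prod_distrib[of _ N])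
    then show "?C *\<^sub>v v i = 0\<^sub>v N" unfolding ve[OF i] using vc[OF i]
      by (intro eq_vecI, auto simp: algebra_simps)
  qed
  then have "card I \<le> kernel_dim ?C"
    using card_le_kernel_dim_by_dual_family[OF C finI _ dual] by blast
  also have "\<dots> \<le> Polynomial.order ev (char_poly A)" by (rule geometric_le_algebraic_multiplicity[OF A])
  finally show ?thesis .
qed

text \<open>The same bound for real matrices, by embedding into the complex numbers
  (which preserves characteristic polynomials and root orders).\<close>
lemma card_le_order_by_dual_family:
  fixes A :: "real mat" and v :: "'i \<Rightarrow> real vec"
  assumes A: "A \<in> carrier_mat N N" and finI: "finite I"
    and vc: "\<And>i. i \<in> I \<Longrightarrow> v i \<in> carrier_vec N"
    and ve: "\<And>i. i \<in> I \<Longrightarrow> A *\<^sub>v v i = ev \<cdot>\<^sub>v v i"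
    and dual: "\<And>i j. i \<in> I \<Longrightarrow> j \<in> I \<Longrightarrow> (\<Sum>k<N. w i k * v j $ k) \<noteq> 0 \<longleftrightarrow> i = j"
  shows "card I \<le> Polynomial.order ev (char_poly A)"
proof -
  let ?h = "complex_of_real"
  have "card I \<le> Polynomial.order (?h ev) (char_poly (map_mat ?h A))"
  proof (rule card_le_order_by_dual_family_complex
      [where v = "\<lambda>i. map_vec ?h (v i)" and w = "\<lambda>i k. ?h (w i k)"])
    show "map_mat ?h A \<in> carrier_mat N N" using A by simp
    show "finite I" by fact
    fix i assume i: "i \<in> I"
    show "map_vec ?h (v i) \<in> carrier_vec N" using vc[OF i] by simp
    show "map_mat ?h A *\<^sub>v map_vec ?h (v i) = ?h ev \<cdot>\<^sub>v map_vec ?h (v i)"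
      using of_real_hom.mult_mat_vec_hom[OF A vc[OF i]] ve[OF i] of_real_hom.vec_hom_smult
      by metis
    fix j assume j: "j \<in> I"
    have "(\<Sum>k<N. ?h (w i k) * map_vec ?h (v j) $ k) = ?h (\<Sum>k<N. w i k * v j $ k)"
      unfolding of_real_sum of_real_mult using vc[OF j] by (intro sum.cong, auto)
    thus "((\<Sum>k<N. ?h (w i k) * map_vec ?h (v j) $ k) \<noteq> 0) = (i = j)"
      using dual[OF i j] by (simp only: of_real_eq_0_iff)
  qed
  also have "char_poly (map_mat ?h A) = map_poly ?h (char_poly A)"
    by (rule of_real_hom.char_poly_hom[OF A])
  also have "Polynomial.order (?h ev) (map_poly ?h (char_poly A)) = Polynomial.order ev (char_poly A)"
  proof -
    interpret map_poly_inj_idom_divide_hom ?h ..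
    show ?thesis by (rule order_hom)
  qed
  finally show ?thesis .
qed

lemma eigenvalue_if_order_pos:
  fixes A :: "'a :: field mat"
  assumes A: "A \<in> carrier_mat N N" and pos: "1 \<le> Polynomial.order ev (char_poly A)"
  shows "eigenvalue A ev"
proof -
  have "char_poly A \<noteq> 0" using degree_monic_char_poly[OF A] by auto
  hence "poly (char_poly A) ev = 0" using pos unfolding order_root by auto
  thus ?thesis using eigenvalue_root_char_poly[OF A] by simp
qed

section \<open>The adjacency operator of the star-transposition graph\<close>

lemma finite_Sym: "finite (Sym n)"
  unfolding Sym_def by (rule finite_permutations) simp

lemma Sym_inj: "g \<in> Sym n \<Longrightarrow> inj g"
  unfolding Sym_def by (auto intro: permutes_inj)

lemma Sym_range: "g \<in> Sym n \<Longrightarrow> x \<in> {1..n} \<Longrightarrow> g x \<in> {1..n}"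
  unfolding Sym_def by (metis mem_Collect_eq permutes_in_image)

lemma transpose_apply: "transpose a b x = (if x = a then b else if x = b then a else x)"
  by (simp add: transpose_def)

lemma transpose_comp_Sym: "g \<in> Sym n \<Longrightarrow> k \<in> {2..n} \<Longrightarrow> transpose 1 k \<circ> g \<in> Sym n"
  unfolding Sym_def by (auto intro!: permutes_compose permutes_swap_id)

definition star_op :: "nat \<Rightarrow> ((nat \<Rightarrow> nat) \<Rightarrow> real) \<Rightarrow> (nat \<Rightarrow> nat) \<Rightarrow> real" where
  "star_op n \<phi> g = (\<Sum>k\<in>{2..n}. \<phi> (transpose 1 k \<circ> g))"

text \<open>The n-1 neighbours of a vertex are distinct (they differ in the preimage of 1),
  so a row of the adjacency matrix sums a function exactly over the neighbours.\<close>
lemma adjacency_row_sum: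
  fixes F :: "(nat \<Rightarrow> nat) \<Rightarrow> real"
  assumes g: "g \<in> Sym n"
  shows "(\<Sum>h\<in>Sym n. (if \<exists>t\<in>star_transp n. h = t \<circ> g then 1 else 0) * F h) = star_op n F g"
proof -
  let ?nb = "(\<lambda>k. transpose 1 k \<circ> g) ` {2..n}"
  have inj: "inj_on (\<lambda>k. transpose 1 k \<circ> g) {2..n}"
  proof (rule inj_onI)
    fix k k' assume k: "k \<in> {2..n}" and e: "transpose 1 k \<circ> g = transpose 1 k' \<circ> g"
    have "1 \<in> g ` {1..n}" using g k unfolding Sym_def by (simp add: permutes_image)
    then obtain x where x: "g x = 1" by auto
    from fun_cong[OF e, of x] x show "k = k'" by auto
  qed
  have sub: "?nb \<subseteq> Sym n" using transpose_comp_Sym[OF g] by auto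
  have "star_transp n = (\<lambda>k. transpose 1 k) ` {2..n}" by (auto simp: star_transp_def)
  then have "(\<exists>t\<in>star_transp n. h = t \<circ> g) \<longleftrightarrow> h \<in> ?nb" for h by auto
  then have "(\<Sum>h\<in>Sym n. (if \<exists>t\<in>star_transp n. h = t \<circ> g then 1 else 0) * F h)
      = (\<Sum>h\<in>Sym n. (if h \<in> ?nb then F h else 0))"
    by (intro sum.cong) simp_all
  also have "\<dots> = (\<Sum>h\<in>?nb. F h)"
    using sum.inter_restrict[symmetric, OF finite_Sym, of ?nb F] sub by (simp add: Int_absorb1)
  also have "\<dots> = star_op n F g"
    unfolding star_op_def using sum.reindex[OF inj, of F] by (simp add: o_def)
  finally show ?thesis .
qed

lemma cayley_adj_mat_carrier: "\<exists>N. cayley_adj_mat (Sym n) (star_transp n) \<in> carrier_mat N N"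
  unfolding cayley_adj_mat_def Let_def by (intro exI, rule mat_carrier)

lemma vertex_enum_Sym: "distinct (vertex_enum (Sym n)) \<and> set (vertex_enum (Sym n)) = Sym n"
  unfolding vertex_enum_def by (rule someI_ex, insert finite_distinct_list[OF finite_Sym], auto)

lemma cayley_adj_mat_mult_vec:
  fixes n :: nat and \<phi> :: "(nat \<Rightarrow> nat) \<Rightarrow> real"
  defines "vs \<equiv> vertex_enum (Sym n)"
  shows "cayley_adj_mat (Sym n) (star_transp n) *\<^sub>v vec (length vs) (\<lambda>k. \<phi> (vs!k))
       = vec (length vs) (\<lambda>k. star_op n \<phi> (vs!k))"
proof (rule eq_vecI)
  let ?N = "length vs"
  have vs: "distinct vs" "set vs = Sym n" using vertex_enum_Sym[of n] unfolding vs_def by auto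
  have bij: "bij_betw ((!) vs) {..<?N} (Sym n)" by (rule bij_betw_nth) (use vs in auto)
  have A_eq: "cayley_adj_mat (Sym n) (star_transp n)
      = mat ?N ?N (\<lambda>(i,j). if \<exists>t\<in>star_transp n. vs!j = t \<circ> vs!i then 1 else 0)"
    unfolding cayley_adj_mat_def vs_def Let_def ..
  fix r assume "r < dim_vec (vec ?N (\<lambda>k. star_op n \<phi> (vs!k)))"
  then have r: "r < ?N" by simp
  have "(cayley_adj_mat (Sym n) (star_transp n) *\<^sub>v vec ?N (\<lambda>k. \<phi> (vs!k))) $ r
      = (\<Sum>j<?N. (if \<exists>t\<in>star_transp n. vs!j = t \<circ> vs!r then 1 else 0) * \<phi> (vs!j))"
    using r unfolding A_eq by (auto simp: scalar_prod_def lessThan_atLeast0 intro!: sum.cong)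
  also have "\<dots> = (\<Sum>h\<in>Sym n. (if \<exists>t\<in>star_transp n. h = t \<circ> vs!r then 1 else 0) * \<phi> h)"
    by (rule sum.reindex_bij_betw[OF bij])
  also have "\<dots> = star_op n \<phi> (vs!r)"
    using nth_mem[of r vs] r vs(2) by (intro adjacency_row_sum) simp
  finally show "(cayley_adj_mat (Sym n) (star_transp n) *\<^sub>v vec ?N (\<lambda>k. \<phi> (vs!k))) $ r
      = vec ?N (\<lambda>k. star_op n \<phi> (vs!k)) $ r" using r by simp
qed (simp add: cayley_adj_mat_def Let_def vs_def)

lemma eig_mult_ge_card:
  fixes \<phi> \<psi> :: "'i \<Rightarrow> (nat \<Rightarrow> nat) \<Rightarrow> real"
  assumes finI: "finite I"
    and eig: "\<And>i g. i \<in> I \<Longrightarrow> g \<in> Sym n \<Longrightarrow> star_op n (\<phi> i) g = ev * \<phi> i g"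
    and dual: "\<And>i j. i \<in> I \<Longrightarrow> j \<in> I \<Longrightarrow> (\<Sum>g\<in>Sym n. \<psi> i g * \<phi> j g) \<noteq> 0 \<longleftrightarrow> i = j"
  shows "card I \<le> eig_mult (cayley_adj_mat (Sym n) (star_transp n)) ev"
proof -
  define vs where "vs = vertex_enum (Sym n)"
  define N where "N = length vs"
  define A where "A = cayley_adj_mat (Sym n) (star_transp n)"
  have vs: "distinct vs" "set vs = Sym n" using vertex_enum_Sym[of n] unfolding vs_def by auto
  have bij: "bij_betw ((!) vs) {..<N} (Sym n)" by (rule bij_betw_nth) (use vs in \<open>auto simp: N_def\<close>)
  have A: "A \<in> carrier_mat N N" unfolding A_def N_def vs_def cayley_adj_mat_def Let_def by simp
  show ?thesis unfolding eig_mult_def A_def[symmetric]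
  proof (rule card_le_order_by_dual_family[OF A finI,
        where v = "\<lambda>i. vec N (\<lambda>k. \<phi> i (vs!k))" and w = "\<lambda>i k. \<psi> i (vs!k)"])
    fix i assume i: "i \<in> I"
    show "vec N (\<lambda>k. \<phi> i (vs!k)) \<in> carrier_vec N" by simp
    have "vec N (\<lambda>k. star_op n (\<phi> i) (vs!k)) = ev \<cdot>\<^sub>v vec N (\<lambda>k. \<phi> i (vs!k))"
      using eig[OF i] nth_mem vs(2) unfolding N_def by (intro eq_vecI) auto
    then show "A *\<^sub>v vec N (\<lambda>k. \<phi> i (vs!k)) = ev \<cdot>\<^sub>v vec N (\<lambda>k. \<phi> i (vs!k))"
      unfolding A_def N_def vs_def cayley_adj_mat_mult_vec by (simp only: N_def vs_def)
    fix j assume j: "j \<in> I"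
    have "(\<Sum>k<N. \<psi> i (vs!k) * vec N (\<lambda>k. \<phi> j (vs!k)) $ k) = (\<Sum>k<N. \<psi> i (vs!k) * \<phi> j (vs!k))"
      by (rule sum.cong, auto)
    also have "\<dots> = (\<Sum>g\<in>Sym n. \<psi> i g * \<phi> j g)" by (rule sum.reindex_bij_betw[OF bij])
    finally show "((\<Sum>k<N. \<psi> i (vs!k) * vec N (\<lambda>k. \<phi> j (vs!k)) $ k) \<noteq> 0) = (i = j)"
      using dual[OF i j] by simp
  qed
qed

lemma cayley_eigenvalue_if_mult_pos:
  assumes "1 \<le> eig_mult (cayley_adj_mat (Sym n) (star_transp n)) ev"
  shows "eigenvalue (cayley_adj_mat (Sym n) (star_transp n)) ev"
  using cayley_adj_mat_carrier[of n] eigenvalue_if_order_pos assms unfolding eig_mult_def by blast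

lemma sum_Sym_point:
  assumes "x \<in> Sym n"
  shows "(\<Sum>g\<in>Sym n. (if g = x then 1 else 0) * f g) = (f x :: real)"
proof -
  have "(\<Sum>g\<in>Sym n. (if g = x then 1 else 0) * f g) = (\<Sum>g\<in>Sym n. if g = x then f g else 0)"
    by (rule sum.cong, auto)
  thus ?thesis using assms by (simp add: sum.delta[OF finite_Sym])
qed

section \<open>Eigenfunctions for the eigenvalues n - l and -(n - l)\<close>

lemma det_zero_row:
  assumes A: "A \<in> carrier_mat N N" and i: "i < N" and z: "\<And>j. j < N \<Longrightarrow> A $$ (i,j) = 0"
  shows "det A = 0"
  unfolding det_def'[OF A]
proof (rule sum.neutral, intro ballI)
  fix p assume "p \<in> {p. p permutes {0..<N}}"
  hence "p i < N" using permutes_in_image[of p "{0..<N}" i] i by simp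
  hence "(\<Prod>i = 0..<N. A $$ (i, p i)) = 0" by (intro prod_zero, simp, intro bexI[of _ i], auto simp: z i)
  thus "signof p * (\<Prod>i = 0..<N. A $$ (i, p i)) = 0" by simp
qed

definition pattern_mat :: "nat list \<Rightarrow> nat \<Rightarrow> (nat \<Rightarrow> nat) \<Rightarrow> real mat" where
  "pattern_mat ws m f = mat (Suc m) (Suc m) (\<lambda>(i,c). if i = 0 then 1 else if f i = ws ! c then 1 else 0)"

lemma pattern_mat_carrier: "pattern_mat ws m f \<in> carrier_mat (Suc m) (Suc m)"
  unfolding pattern_mat_def by simp

text \<open>If some f i (1 \<le> i \<le> m) is not a letter of ws, its row is zero.\<close>
lemma det_pattern_mat_vanishes:
  assumes len: "length ws = Suc m" and i: "i \<in> {1..m}" and fi: "f i \<notin> set ws"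
  shows "det (pattern_mat ws m f) = 0"
  by (rule det_zero_row[OF pattern_mat_carrier, of i], insert i fi len, auto simp: pattern_mat_def)

lemma pattern_mat_cong:
  assumes "\<And>i. i \<in> {1..m} \<Longrightarrow> f i = f' i"
  shows "pattern_mat ws m f = pattern_mat ws m f'"
  unfolding pattern_mat_def by (rule eq_matI, insert assms, auto)

text \<open>Alternation: if f1 and f2 differ only at one row i0, where they take two
  different letters k1, k2 not used elsewhere, the pattern matrices differ by a column
  swap, so their determinants cancel.\<close>
lemma det_pattern_mat_swap:
  assumes len: "length ws = Suc m" and dist: "distinct ws"
    and k12: "k1 \<noteq> k2" "k1 \<in> set ws" "k2 \<in> set ws" and i0: "i0 \<in> {1..m}"
    and f1: "f1 i0 = k1" and f2: "f2 i0 = k2"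
    and other: "\<And>i. i \<in> {1..m} \<Longrightarrow> i \<noteq> i0 \<Longrightarrow> f1 i = f2 i \<and> f1 i \<noteq> k1 \<and> f1 i \<noteq> k2"
  shows "det (pattern_mat ws m f1) + det (pattern_mat ws m f2) = 0"
proof -
  obtain c1 where c1: "c1 < Suc m" "ws ! c1 = k1" using k12 len by (metis in_set_conv_nth)
  obtain c2 where c2: "c2 < Suc m" "ws ! c2 = k2" using k12 len by (metis in_set_conv_nth)
  have c12: "c1 \<noteq> c2" using c1 c2 k12 by auto
  have nth_eq: "ws ! c = ws ! c' \<longleftrightarrow> c = c'" if "c < Suc m" "c' < Suc m" for c c'
    using nth_eq_iff_index_eq[OF dist] that len by auto
  have "pattern_mat ws m f2 = swapcols c1 c2 (pattern_mat ws m f1)"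
  proof (rule eq_matI)
    fix i c assume "i < dim_row (swapcols c1 c2 (pattern_mat ws m f1))"
      and "c < dim_col (swapcols c1 c2 (pattern_mat ws m f1))"
    hence i: "i < Suc m" and c: "c < Suc m" using pattern_mat_carrier[of ws m f1] by auto
    consider "i = 0" | "i = i0" | "i \<in> {1..m}" "i \<noteq> i0" using i by force
    then show "pattern_mat ws m f2 $$ (i, c) = swapcols c1 c2 (pattern_mat ws m f1) $$ (i, c)"
    proof cases
      case 2
      have "k1 = ws ! c \<longleftrightarrow> c = c1" "k2 = ws ! c \<longleftrightarrow> c = c2"
        using nth_eq[OF c c1(1)] nth_eq[OF c c2(1)] c1 c2 by auto
      moreover have "i \<noteq> 0" using 2 i0 by simp
      ultimately show ?thesis using 2 i c c1 c2 f1 f2 c12 k12(1) by (simp add: pattern_mat_def)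
    next
      case 3
      then show ?thesis using other[of i] i c c1 c2 by (auto simp: pattern_mat_def)
    qed (use i c c1 c2 in \<open>simp add: pattern_mat_def\<close>)
  qed (auto simp: pattern_mat_def)
  then have "det (pattern_mat ws m f2) = - det (pattern_mat ws m f1)"
    using det_swapcols[OF c1(1) c2(1) c12 pattern_mat_carrier] by simp
  thus ?thesis by simp
qed

definition subset_word :: "nat set \<Rightarrow> nat list" where
  "subset_word S = sorted_list_of_set (insert 2 S)"

definition det_eigfun :: "nat set \<Rightarrow> (nat \<Rightarrow> nat) \<Rightarrow> real" where
  "det_eigfun S g = det (pattern_mat (subset_word S) (card S) g)"

lemma subset_word_props:
  assumes S: "S \<subseteq> {3..n}"
  shows "set (subset_word S) = insert 2 S" "distinct (subset_word S)"
    "length (subset_word S) = Suc (card S)"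
proof -
  have fin: "finite S" using S finite_subset by auto
  have "2 \<notin> S" using S by auto
  show "set (subset_word S) = insert 2 S"
    unfolding subset_word_def by (rule set_sorted_list_of_set, simp add: fin)
  show "distinct (subset_word S)" unfolding subset_word_def by (rule distinct_sorted_list_of_set)
  show "length (subset_word S) = Suc (card S)" unfolding subset_word_def
    by (simp only: length_sorted_list_of_set card_insert_disjoint[OF fin \<open>2 \<notin> S\<close>])
qed

lemma det_eigfun_vanishes:
  assumes S: "S \<subseteq> {3..n}" and i: "i \<in> {1..card S}" and fi: "f i \<notin> insert 2 S"
  shows "det_eigfun S f = 0"
  unfolding det_eigfun_def using det_pattern_mat_vanishes[OF subset_word_props(3)[OF S] i] fi
    subset_word_props(1)[OF S] by simp

lemma det_eigfun_cong:
  assumes "\<And>i. i \<in> {1..card S} \<Longrightarrow> f i = f' i"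
  shows "det_eigfun S f = det_eigfun S f'"
  unfolding det_eigfun_def by (rule arg_cong[where f = det], rule pattern_mat_cong, rule assms)

text \<open>When g does not send any of 1..|S| to 1, each neighbour (1 k) o g either sends
  some i to 1 (contributing 0) or agrees with g on 1..|S|; the latter happens for
  the n-1-|S| letters k outside g{1..|S|}.\<close>
lemma star_op_det_eigfun_avoiding_one:
  assumes S: "S \<subseteq> {3..n}" and g: "g \<in> Sym n" and n: "1 \<le> n" and one: "1 \<notin> g ` {1..card S}"
  shows "star_op n (det_eigfun S) g = (real n - 1 - real (card S)) * det_eigfun S g"
proof -
  define Q where "Q = g ` {1..card S}"
  have m: "card S \<le> n - 2" using card_mono[of "{3..n}" S] S by simp
  have "g i \<in> {2..n}" if i: "i \<in> {1..card S}" for i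
  proof -
    have "g i \<in> {1..n}" using Sym_range[OF g, of i] i m by auto
    moreover have "g i \<noteq> 1" using one i by force
    ultimately show ?thesis by auto
  qed
  then have Q: "Q \<subseteq> {2..n}" unfolding Q_def by auto
  have cQ: "card Q = card S"
    unfolding Q_def using Sym_inj[OF g] by (simp add: card_image inj_on_subset)
  have neighbour: "det_eigfun S (transpose 1 k \<circ> g) = (if k \<in> Q then 0 else det_eigfun S g)"
    if k: "k \<in> {2..n}" for k
  proof (cases "k \<in> Q")
    case True
    then obtain i where i: "i \<in> {1..card S}" "g i = k" unfolding Q_def by auto
    then have "(transpose 1 k \<circ> g) i = 1" by simp
    then have "det_eigfun S (transpose 1 k \<circ> g) = 0"
      using S by (intro det_eigfun_vanishes[OF S i(1)]) auto
    then show ?thesis using True by simp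
  next
    case False
    have "det_eigfun S (transpose 1 k \<circ> g) = det_eigfun S g"
    proof (rule det_eigfun_cong)
      fix i assume "i \<in> {1..card S}"
      then have "g i \<noteq> 1" "g i \<noteq> k" using False one unfolding Q_def by force+
      then show "(transpose 1 k \<circ> g) i = g i" by (simp add: transpose_apply)
    qed
    then show ?thesis using False by simp
  qed
  have "star_op n (det_eigfun S) g = (\<Sum>k\<in>{2..n}. if k \<in> Q then 0 else det_eigfun S g)"
    unfolding star_op_def by (rule sum.cong[OF refl neighbour])
  also have "\<dots> = real (card ({2..n} - Q)) * det_eigfun S g"
    by (subst sum.If_cases, auto simp: Diff_eq)
  also have "card ({2..n} - Q) = (n - 1) - card S"
    using card_Diff_subset[OF finite_subset[OF Q] Q] cQ by simp
  finally show ?thesis using m n by simp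
qed

text \<open>When g i0 = 1 with i0 \<le> |S| and g maps the other rows into {2} \<union> S, exactly two
  neighbours (1 k) o g with k \<in> {2} \<union> S keep the pattern inside the word, and they
  differ by a swap in row i0: their contributions cancel.\<close>
lemma det_eigfun_pair_cancel:
  assumes S: "S \<subseteq> {3..n}" and g: "g \<in> Sym n"
    and i0: "i0 \<in> {1..card S}" "g i0 = 1"
    and into: "\<And>i. i \<in> {1..card S} \<Longrightarrow> i \<noteq> i0 \<Longrightarrow> g i \<in> insert 2 S"
  shows "(\<Sum>k\<in>insert 2 S - g ` {1..card S}. det_eigfun S (transpose 1 k \<circ> g)) = 0"
proof -
  define W where "W = insert 2 S"
  define Q where "Q = g ` {1..card S}"
  define R where "R = {1..card S} - {i0}"
  have gR: "g i \<noteq> 1" if "i \<in> R" for i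
    using that i0 injD[OF Sym_inj[OF g], of i i0] unfolding R_def by auto
  have "g ` R \<subseteq> W" using into unfolding R_def W_def by blast
  moreover have "{1..card S} = insert i0 R" unfolding R_def using i0 by auto
  then have "Q = insert 1 (g ` R)" unfolding Q_def using i0 by simp
  ultimately have WQ: "W \<inter> Q = g ` R" using S by (auto simp: W_def)
  have "card (g ` R) = card S - 1" using Sym_inj[OF g] i0 unfolding R_def
    by (subst card_image, auto simp: inj_on_def)
  moreover have "card W = Suc (card S)" unfolding W_def using subset_word_props[OF S]
    by (metis distinct_card)
  ultimately have "card (W - Q) = 2"
    using card_Diff_subset_Int[of W Q] WQ i0 by (auto simp: W_def R_def)
  then obtain k1 k2 where k12: "k1 \<noteq> k2" "W - Q = {k1, k2}" by (auto simp: card_2_iff)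
  have "(\<Sum>k\<in>W - Q. det_eigfun S (transpose 1 k \<circ> g))
      = det_eigfun S (transpose 1 k1 \<circ> g) + det_eigfun S (transpose 1 k2 \<circ> g)"
    unfolding k12(2) using k12(1) by simp
  also have "\<dots> = 0" unfolding det_eigfun_def
  proof (rule det_pattern_mat_swap[OF subset_word_props(3,2)[OF S] k12(1) _ _ i0(1)])
    show "k1 \<in> set (subset_word S)" "k2 \<in> set (subset_word S)"
      using k12 subset_word_props(1)[OF S] by (auto simp: W_def)
    show "(transpose 1 k1 \<circ> g) i0 = k1" "(transpose 1 k2 \<circ> g) i0 = k2" using i0 by simp_all
    fix i assume "i \<in> {1..card S}" "i \<noteq> i0"
    moreover have "k1 \<notin> Q" "k2 \<notin> Q" using k12 by auto
    ultimately show "(transpose 1 k1 \<circ> g) i = (transpose 1 k2 \<circ> g) i \<and>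
        (transpose 1 k1 \<circ> g) i \<noteq> k1 \<and> (transpose 1 k1 \<circ> g) i \<noteq> k2"
      using gR[of i] by (auto simp: transpose_apply Q_def R_def)
  qed
  finally show ?thesis unfolding W_def Q_def .
qed

text \<open>When g sends some i0 \<le> |S| to 1, both the function and the operator vanish at g:
  only neighbours (1 k) o g with k \<in> ({2} \<union> S) - g{1..|S|} can contribute, and these
  either all vanish or cancel in pairs.\<close>
lemma star_op_det_eigfun_through_one:
  assumes S: "S \<subseteq> {3..n}" and g: "g \<in> Sym n" and i0: "i0 \<in> {1..card S}" "g i0 = 1"
  shows "star_op n (det_eigfun S) g = 0"
proof -
  define W where "W = insert 2 S"
  define Q where "Q = g ` {1..card S}"
  from i0 obtain s where "s \<in> S" by (cases "S = {}") auto
  then have W: "W \<subseteq> {2..n}" unfolding W_def using S by auto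
  have vanish: "det_eigfun S (transpose 1 k \<circ> g) = 0" if "k \<in> {2..n} - (W - Q)" for k
  proof (cases "k \<in> Q")
    case True
    then obtain i where i: "i \<in> {1..card S}" "g i = k" unfolding Q_def by auto
    then have "(transpose 1 k \<circ> g) i = 1" by simp
    then show ?thesis using S by (intro det_eigfun_vanishes[OF S i(1)]) auto
  next
    case False
    then have "(transpose 1 k \<circ> g) i0 \<notin> W" using that i0 by simp
    then show ?thesis unfolding W_def by (rule det_eigfun_vanishes[OF S i0(1)])
  qed
  have "star_op n (det_eigfun S) g = (\<Sum>k\<in>W - Q. det_eigfun S (transpose 1 k \<circ> g))"
    unfolding star_op_def using W vanish by (intro sum.mono_neutral_right) auto
  also have "\<dots> = 0"
  proof (cases "\<exists>i\<in>{1..card S}. i \<noteq> i0 \<and> g i \<notin> W")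
    case True
    then obtain i where i: "i \<in> {1..card S}" "i \<noteq> i0" "g i \<notin> W" by auto
    have "g i \<noteq> 1" using i i0 injD[OF Sym_inj[OF g], of i i0] by auto
    have "det_eigfun S (transpose 1 k \<circ> g) = 0" if k: "k \<in> W - Q" for k
    proof (rule det_eigfun_vanishes[OF S i(1)])
      have "g i \<noteq> k" using i(1) k unfolding Q_def by force
      then show "(transpose 1 k \<circ> g) i \<notin> insert 2 S"
        using \<open>g i \<noteq> 1\<close> i(3) by (simp add: transpose_apply W_def)
    qed
    then show ?thesis by simp
  next
    case False
    then show ?thesis using det_eigfun_pair_cancel[OF S g i0] unfolding W_def Q_def by blast
  qed
  finally show ?thesis .
qed

lemma det_eigfun_eigen:
  assumes S: "S \<subseteq> {3..n}" and g: "g \<in> Sym n" and n: "1 \<le> n"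
  shows "star_op n (det_eigfun S) g = (real n - 1 - real (card S)) * det_eigfun S g"
proof (cases "1 \<in> g ` {1..card S}")
  case True
  then obtain i0 where i0: "i0 \<in> {1..card S}" "g i0 = 1" by auto
  have "det_eigfun S g = 0" using S i0 by (intro det_eigfun_vanishes[OF S i0(1)]) auto
  then show ?thesis using star_op_det_eigfun_through_one[OF S g i0] by simp
qed (rule star_op_det_eigfun_avoiding_one[OF S g n])

text \<open>Multiplying by the sign character turns n - 1 - |S| into its negative, since
  every neighbour differs from g by a transposition.\<close>
definition sign_eigfun :: "nat set \<Rightarrow> (nat \<Rightarrow> nat) \<Rightarrow> real" where
  "sign_eigfun S g = real_of_int (sign g) * det_eigfun S g"

lemma sign_eigfun_eigen:
  assumes S: "S \<subseteq> {3..n}" and g: "g \<in> Sym n" and n: "1 \<le> n"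
  shows "star_op n (sign_eigfun S) g = - (real n - 1 - real (card S)) * sign_eigfun S g"
proof -
  have sign: "sign (transpose 1 k \<circ> g) = - sign g" if k: "k \<in> {2..n}" for k
  proof -
    have "permutation g" using g unfolding Sym_def by (auto simp: permutation_permutes)
    then show ?thesis using k by (simp add: sign_compose permutation_swap_id sign_swap_id)
  qed
  have "star_op n (sign_eigfun S) g
      = (\<Sum>k\<in>{2..n}. - real_of_int (sign g) * det_eigfun S (transpose 1 k \<circ> g))"
    unfolding star_op_def
  proof (rule sum.cong[OF refl])
    fix k assume k: "k \<in> {2..n}"
    show "sign_eigfun S (transpose 1 k \<circ> g)
        = - real_of_int (sign g) * det_eigfun S (transpose 1 k \<circ> g)"
      unfolding sign_eigfun_def sign[OF k] by simp
  qed
  also have "\<dots> = - real_of_int (sign g) * star_op n (det_eigfun S) g"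
    unfolding star_op_def by (simp add: sum_distrib_left)
  finally show ?thesis by (simp add: det_eigfun_eigen[OF S g n] sign_eigfun_def algebra_simps)
qed

lemma permutes_extend_inj:
  assumes fin: "finite S" and D: "D \<subseteq> S" and inj: "inj_on f D" and img: "f ` D \<subseteq> S"
  shows "\<exists>g. g permutes S \<and> (\<forall>x\<in>D. g x = f x)"
proof -
  have finD: "finite D" using fin D finite_subset by auto
  have "card (S - D) = card (S - f ` D)"
    using card_Diff_subset[OF finD D] card_Diff_subset[OF finite_imageI[OF finD] img]
      card_image[OF inj] by simp
  then obtain h where h: "bij_betw h (S - D) (S - f ` D)"
    using finite_same_card_bij[of "S - D" "S - f ` D"] fin by auto
  define g where "g x = (if x \<in> D then f x else if x \<in> S then h x else x)" for x
  have b1: "bij_betw g D (f ` D)"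
    by (rule bij_betw_cong[THEN iffD2, of _ _ f], auto simp: g_def inj_on_imp_bij_betw[OF inj])
  have b2: "bij_betw g (S - D) (S - f ` D)"
    by (rule bij_betw_cong[THEN iffD2, of _ _ h], auto simp: g_def h)
  have "bij_betw g (D \<union> (S - D)) (f ` D \<union> (S - f ` D))" by (rule bij_betw_combine[OF b1 b2], auto)
  moreover have "D \<union> (S - D) = S" "f ` D \<union> (S - f ` D) = S" using D img by auto
  ultimately have "g permutes S"
    by (intro bij_imp_permutes) (auto simp: g_def)
  thus ?thesis by (auto simp: g_def)
qed

definition word_witness :: "nat \<Rightarrow> nat set \<Rightarrow> (nat \<Rightarrow> nat)" where
  "word_witness n S = (SOME g. g \<in> Sym n \<and> (\<forall>i\<in>{1..card S}. g i = subset_word S ! i))"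

lemma word_witness:
  assumes S: "S \<subseteq> {3..n}"
  shows "word_witness n S \<in> Sym n" "\<And>i. i \<in> {1..card S} \<Longrightarrow> word_witness n S i = subset_word S ! i"
proof -
  note wp = subset_word_props[OF S]
  have m: "card S \<le> n - 2" using card_mono[of "{3..n}" S] S by simp
  have "(!) (subset_word S) ` {1..card S} \<subseteq> {1..n}"
  proof (cases "S = {}")
    case False
    then have "set (subset_word S) \<subseteq> {1..n}" using wp(1) S by auto
    then show ?thesis using wp(3) by auto
  qed simp
  then have "\<exists>g. g permutes {1..n} \<and> (\<forall>i\<in>{1..card S}. g i = subset_word S ! i)"
    using m wp(2,3) by (intro permutes_extend_inj) (auto simp: inj_on_def nth_eq_iff_index_eq)
  hence "\<exists>g. g \<in> Sym n \<and> (\<forall>i\<in>{1..card S}. g i = subset_word S ! i)" unfolding Sym_def by auto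
  from someI_ex[OF this] show "word_witness n S \<in> Sym n"
    "\<And>i. i \<in> {1..card S} \<Longrightarrow> word_witness n S i = subset_word S ! i"
    unfolding word_witness_def by auto
qed

text \<open>At its own witness the pattern matrix is upper unitriangular.\<close>
lemma det_eigfun_witness_diag:
  assumes S: "S \<subseteq> {3..n}"
  shows "det_eigfun S (word_witness n S) = 1"
proof -
  note wp = subset_word_props[OF S]
  define M where "M = pattern_mat (subset_word S) (card S) (word_witness n S)"
  have M: "M \<in> carrier_mat (Suc (card S)) (Suc (card S))" unfolding M_def by (rule pattern_mat_carrier)
  have ent: "M $$ (i,j) = (if i = j then 1 else 0)" if "i \<in> {1..card S}" "j < Suc (card S)" for i j
    unfolding M_def pattern_mat_def using that word_witness(2)[OF S, of i] wp(2,3)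
    by (auto simp: nth_eq_iff_index_eq)
  have ut: "upper_triangular M" unfolding upper_triangular_def using M ent by auto
  have diag: "M $$ (i,i) = 1" if "i < Suc (card S)" for i
    using ent[of i i] that by (cases "i = 0") (auto simp: M_def pattern_mat_def)
  have "diag_mat M = map (\<lambda>i. 1) [0..<Suc (card S)]"
    unfolding diag_mat_def using M diag by (intro map_cong) auto
  thus ?thesis unfolding det_eigfun_def M_def[symmetric] det_upper_triangular[OF ut M]
    by (simp add: map_replicate_const)
qed

text \<open>At the witness of another set of the same size some row leaves the word.\<close>
lemma det_eigfun_witness_off:
  assumes S: "S \<subseteq> {3..n}" and S': "S' \<subseteq> {3..n}" and c: "card S' = card S" and ne: "S \<noteq> S'"
  shows "det_eigfun S' (word_witness n S) = 0"
proof -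
  note wp = subset_word_props[OF S]
  have "\<not> S \<subseteq> S'" using card_subset_eq[of S' S] finite_subset[OF S'] c ne by auto
  then obtain s where s: "s \<in> S" "s \<notin> S'" by auto
  then obtain i where i: "i < Suc (card S)" "subset_word S ! i = s"
    using wp(1,3) by (metis in_set_conv_nth insertI2)
  have "i \<noteq> 0"
  proof
    assume "i = 0"
    have "sorted (subset_word S)" "2 \<in> set (subset_word S)" using wp(1) by (auto simp: subset_word_def)
    then have "subset_word S ! 0 \<le> 2" using wp(3) by (metis in_set_conv_nth le0 sorted_nth_mono)
    thus False using i \<open>i = 0\<close> s S by auto
  qed
  hence i': "i \<in> {1..card S'}" using i c by auto
  have "word_witness n S i = s" using word_witness(2)[OF S] i \<open>i \<noteq> 0\<close> by auto
  moreover have "s \<notin> insert 2 S'" using s S by auto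
  ultimately show ?thesis by (intro det_eigfun_vanishes[OF S' i']) simp
qed

text \<open>The multiplicity bounds for n - l and -(n - l): the (l-1)-subsets of {3..n}
  index eigenfunctions, separated by point evaluation at their witnesses.\<close>
lemma eig_mult_plus_minus:
  assumes l: "1 \<le> l" "l \<le> n - 1"
  shows "eig_mult (cayley_adj_mat (Sym n) (star_transp n)) (real (n - l)) \<ge> (n - 2) choose (l - 1)"
    and "eig_mult (cayley_adj_mat (Sym n) (star_transp n)) (- real (n - l)) \<ge> (n - 2) choose (l - 1)"
proof -
  define I where "I = {S. S \<subseteq> {3..n} \<and> card S = l - 1}"
  define \<psi> where "\<psi> S g = (if g = word_witness n S then 1 else 0 :: real)" for S g
  have n: "1 \<le> n" using l by simp
  have finI: "finite I" unfolding I_def by simp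
  have S_sub: "S \<subseteq> {3..n}" if "S \<in> I" for S using that unfolding I_def by simp
  have cI: "card I = (n - 2) choose (l - 1)" unfolding I_def using n_subsets[of "{3..n}" "l - 1"] by simp
  have ev: "real n - 1 - real (card S) = real (n - l)" if "S \<in> I" for S
    using that l unfolding I_def by simp
  have point: "(\<Sum>g\<in>Sym n. \<psi> S g * f g) = f (word_witness n S)" if "S \<in> I" for S f
    unfolding \<psi>_def using sum_Sym_point word_witness(1) that by (simp add: I_def)
  have sep: "det_eigfun S' (word_witness n S) \<noteq> 0 \<longleftrightarrow> S = S'" if "S \<in> I" "S' \<in> I" for S S'
    using det_eigfun_witness_diag[of S n] det_eigfun_witness_off[of S n S'] that unfolding I_def by auto
  have "card I \<le> eig_mult (cayley_adj_mat (Sym n) (star_transp n)) (real (n - l))"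
  proof (rule eig_mult_ge_card[OF finI, where \<phi> = det_eigfun and \<psi> = \<psi>])
    fix S g assume S: "S \<in> I" and g: "g \<in> Sym n"
    show "star_op n (det_eigfun S) g = real (n - l) * det_eigfun S g"
      unfolding det_eigfun_eigen[OF S_sub[OF S] g n] ev[OF S] by simp
  qed (simp add: point sep)
  then show "eig_mult (cayley_adj_mat (Sym n) (star_transp n)) (real (n - l)) \<ge> (n - 2) choose (l - 1)"
    using cI by simp
  have "card I \<le> eig_mult (cayley_adj_mat (Sym n) (star_transp n)) (- real (n - l))"
  proof (rule eig_mult_ge_card[OF finI, where \<phi> = sign_eigfun and \<psi> = \<psi>])
    fix S g assume S: "S \<in> I" and g: "g \<in> Sym n"
    show "star_op n (sign_eigfun S) g = - real (n - l) * sign_eigfun S g"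
      unfolding sign_eigfun_eigen[OF S_sub[OF S] g n] ev[OF S] by simp
  qed (simp add: point sep sign_eigfun_def sign_def)
  then show "eig_mult (cayley_adj_mat (Sym n) (star_transp n)) (- real (n - l)) \<ge> (n - 2) choose (l - 1)"
    using cI by simp
qed

section \<open>Eigenfunctions for the eigenvalue 0\<close>

text \<open>For p, u \<in> {2..n} the function zero_eigfun n (p,u) depends only on whether the
  2-set g{1,p} contains u (first argument of the profile) and 1 (second argument).\<close>
definition zero_profile :: "nat \<Rightarrow> bool \<Rightarrow> bool \<Rightarrow> real" where
  "zero_profile n a b = (if b then - (real n - 3) else 1) * ((real n - 1) * of_bool a - 2 + of_bool b)"

definition zero_eigfun :: "nat \<Rightarrow> nat \<times> nat \<Rightarrow> (nat \<Rightarrow> nat) \<Rightarrow> real" where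
  "zero_eigfun n pu g = zero_profile n (snd pu \<in> g ` {1, fst pu}) (1 \<in> g ` {1, fst pu})"

text \<open>The arithmetic heart of the eigenvalue equation: if X = g{1,p} contains c_in
  of the letters in {2..n} - {u}, the remaining c_out are outside, and a, b record
  whether u, 1 \<in> X, then the neighbour contributions sum to zero.\<close>
lemma zero_profile_balance:
  fixes c_in c_out :: nat
  assumes "c_in + of_bool a + of_bool b = 2" and "c_in + c_out + 2 = n"
  shows "zero_profile n b a + real c_in * zero_profile n a True + real c_out * zero_profile n a False = 0"
proof -
  have c_out: "real c_out = real n - 2 - real c_in" using assms(2) by linarith
  from assms(1) show ?thesis
    by (cases a; cases b) (auto simp: zero_profile_def c_out algebra_simps)
qed

lemma in_transpose_image: "x \<in> transpose a b ` X \<longleftrightarrow> transpose a b x \<in> X"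
  by (metis image_iff transpose_involutory)

text \<open>Passing to the neighbour (1 k) o g replaces X = g{1,p} by (1 k) X: for k \<noteq> u
  only membership of k in X matters, for k = u the roles of u and 1 are exchanged.\<close>
lemma zero_eigfun_neighbour:
  assumes u: "u \<noteq> 1"
  shows "zero_eigfun n (p,u) (transpose 1 k \<circ> g)
       = zero_profile n (if k = u then 1 \<in> g ` {1,p} else u \<in> g ` {1,p}) (k \<in> g ` {1,p})"
proof -
  have img: "(transpose 1 k \<circ> g) ` {1,p} = transpose 1 k ` g ` {1,p}" by (simp add: image_comp)
  have "transpose 1 k u = (if k = u then 1 else u)" using u by (simp add: transpose_apply)
  then show ?thesis unfolding zero_eigfun_def fst_conv snd_conv img in_transpose_image
    by (cases "k = u") simp_all
qed

lemma two_set_counts: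
  assumes X: "X \<subseteq> {1..n}" "card X = 2" and u: "u \<in> {2..n}"
  shows "card (({2..n} - {u}) \<inter> X) + of_bool (u \<in> X) + of_bool (1 \<in> X) = 2"
    and "card (({2..n} - {u}) \<inter> X) + card (({2..n} - {u}) - X) + 2 = n"
proof -
  let ?K = "{2..n} - {u}"
  have fin: "finite X" using X(2) card_ge_0_finite by force
  have "X = (?K \<inter> X) \<union> (X \<inter> {1,u})" using X(1) by auto
  moreover have "card ((?K \<inter> X) \<union> (X \<inter> {1,u})) = card (?K \<inter> X) + card (X \<inter> {1,u})"
    by (rule card_Un_disjoint) (use fin in auto)
  moreover have "card (X \<inter> {1,u}) = of_bool (u \<in> X) + of_bool (1 \<in> X)"
    using u by (cases "u \<in> X"; cases "1 \<in> X") (auto simp: Int_insert_right)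
  ultimately show "card (?K \<inter> X) + of_bool (u \<in> X) + of_bool (1 \<in> X) = 2" using X(2) by simp
  show "card (?K \<inter> X) + card (?K - X) + 2 = n" using card_Int_Diff[of ?K X] u by auto
qed

text \<open>The eigenvalue equation for 0: split off the neighbour k = u and count the
  remaining k \<in> K by membership in X = g{1,p}; the balance identity finishes it.\<close>
lemma zero_eigfun_eigen:
  assumes p: "p \<in> {2..n}" and u: "u \<in> {2..n}" and g: "g \<in> Sym n"
  shows "star_op n (zero_eigfun n (p, u)) g = 0 * zero_eigfun n (p, u) g"
proof -
  define X where "X = g ` {1, p}"
  define K where "K = {2..n} - {u}"
  define a where "a = (u \<in> X)"
  define b where "b = (1 \<in> X)"
  have X: "X \<subseteq> {1..n}" "card X = 2"
    unfolding X_def using Sym_range[OF g] p Sym_inj[OF g] by (auto simp: card_insert_if inj_eq)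
  have "star_op n (zero_eigfun n (p, u)) g
      = (\<Sum>k\<in>{2..n}. zero_profile n (if k = u then b else a) (k \<in> X))"
    unfolding star_op_def a_def b_def X_def
    by (rule sum.cong[OF refl], rule zero_eigfun_neighbour) (use u in simp)
  also have "\<dots> = zero_profile n b a + (\<Sum>k\<in>K. zero_profile n a (k \<in> X))"
    unfolding K_def using u by (subst sum.remove[of _ u]) (auto simp: a_def intro!: sum.cong)
  also have "(\<Sum>k\<in>K. zero_profile n a (k \<in> X))
      = (\<Sum>k\<in>K. if k \<in> X then zero_profile n a True else zero_profile n a False)"
    by (intro sum.cong) auto
  also have "\<dots> = (\<Sum>k\<in>K \<inter> X. zero_profile n a True) + (\<Sum>k\<in>K - X. zero_profile n a False)"
    using sum.If_cases[of K "\<lambda>k. k \<in> X" "\<lambda>_. zero_profile n a True" "\<lambda>_. zero_profile n a False"]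
    by (simp add: K_def Diff_eq)
  also have "zero_profile n b a + \<dots> = 0"
    using zero_profile_balance[OF two_set_counts[OF X u, folded K_def a_def b_def]]
    by (simp add: add.assoc)
  finally show ?thesis by simp
qed

definition zero_dual :: "nat \<Rightarrow> nat \<times> nat \<Rightarrow> (nat \<Rightarrow> nat) \<Rightarrow> real" where
  "zero_dual n pu g = of_bool (g = transpose (fst pu) (snd pu))
      - of_bool (g = transpose (snd pu) n \<circ> transpose (fst pu) (snd pu))"

text \<open>Both test permutations fix 1, and they differ only in where p goes (to u, resp.
  to n); so zero_eigfun n (p',u') sees a difference only when (p',u') = (p,u).\<close>
lemma zero_eigfun_dual_values:
  assumes n: "n \<ge> 4" and p: "p \<in> {2..n-1}" and u: "u \<in> {2..n-1}"
    and p': "p' \<in> {2..n-1}" and u': "u' \<in> {2..n-1}"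
  shows "zero_eigfun n (p',u') (transpose p u) - zero_eigfun n (p',u') (transpose u n \<circ> transpose p u)
    = (if (p',u') = (p,u) then zero_profile n True True - zero_profile n False True else 0)"
proof -
  let ?g = "transpose p u"
  have fix1: "?g 1 = 1" "transpose u n 1 = 1" using p u by (auto simp: transpose_def)
  have g1: "zero_eigfun n (p',u') ?g = zero_profile n (u' = ?g p') True"
    unfolding zero_eigfun_def using fix1 u' by auto
  have g2: "zero_eigfun n (p',u') (transpose u n \<circ> ?g) = zero_profile n (u' = transpose u n (?g p')) True"
    unfolding zero_eigfun_def using fix1 u' by auto
  show ?thesis
  proof (cases "p' = p")
    case True
    have "u \<noteq> n" "u' \<noteq> n" using u u' n by auto
    thus ?thesis unfolding g1 g2 using True by (auto simp: transpose_def)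
  next
    case False
    have "?g p' \<noteq> u" "?g p' \<noteq> n" using False p u p' by (auto simp: transpose_def)
    hence "transpose u n (?g p') = ?g p'" by (auto simp: transpose_def)
    thus ?thesis unfolding g1 g2 using False by auto
  qed
qed

lemma zero_dual_separates:
  assumes n: "n \<ge> 4" and p: "p \<in> {2..n-1}" and u: "u \<in> {2..n-1}"
    and p': "p' \<in> {2..n-1}" and u': "u' \<in> {2..n-1}"
  shows "(\<Sum>g\<in>Sym n. zero_dual n (p,u) g * zero_eigfun n (p',u') g) \<noteq> 0 \<longleftrightarrow> (p,u) = (p',u')"
proof -
  let ?g1 = "transpose p u" and ?g2 = "transpose u n \<circ> transpose p u"
  have g1: "?g1 \<in> Sym n" unfolding Sym_def using p u by (auto intro!: permutes_swap_id)
  have g2: "?g2 \<in> Sym n" unfolding Sym_def using p u n by (auto intro!: permutes_swap_id permutes_compose)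
  have "(\<Sum>g\<in>Sym n. zero_dual n (p,u) g * zero_eigfun n (p',u') g)
     = (\<Sum>g\<in>Sym n. of_bool (g = ?g1) * zero_eigfun n (p',u') g)
       - (\<Sum>g\<in>Sym n. of_bool (g = ?g2) * zero_eigfun n (p',u') g)"
    unfolding zero_dual_def fst_conv snd_conv sum_subtractf[symmetric]
    by (rule sum.cong) (auto simp: algebra_simps)
  also have "\<dots> = zero_eigfun n (p',u') ?g1 - zero_eigfun n (p',u') ?g2"
    using sum_Sym_point[OF g1] sum_Sym_point[OF g2] by (simp add: of_bool_def)
  also have "\<dots> = (if (p',u') = (p,u) then zero_profile n True True - zero_profile n False True else 0)"
    by (rule zero_eigfun_dual_values[OF assms])
  also have "zero_profile n True True - zero_profile n False True = - ((real n - 3) * (real n - 1))"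
    by (simp add: zero_profile_def algebra_simps)
  finally show ?thesis using n by auto
qed

lemma choose_two_le_square: "(n - 1) choose 2 \<le> (n - 2) * (n - 2)"
proof (cases "n \<ge> 3")
  case True
  have "(n - 1) choose 2 = (n - 1) * (n - 2) div 2"
    using choose_two[of "n - 1"] by (simp add: numeral_2_eq_2)
  also have "\<dots> \<le> (2 * (n - 2)) * (n - 2) div 2"
    using True by (intro div_le_mono mult_le_mono1) linarith
  finally show ?thesis by simp
qed simp

lemma eig_mult_zero:
  assumes n: "n \<ge> 4"
  shows "eig_mult (cayley_adj_mat (Sym n) (star_transp n)) 0 \<ge> (n - 1) choose 2"
proof -
  let ?I = "{2..n-1} \<times> {2..n-1}"
  have "card ?I \<le> eig_mult (cayley_adj_mat (Sym n) (star_transp n)) 0"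
  proof (rule eig_mult_ge_card[where \<phi> = "zero_eigfun n" and \<psi> = "zero_dual n"])
    fix i g assume "i \<in> ?I" "g \<in> Sym n"
    then show "star_op n (zero_eigfun n i) g = 0 * zero_eigfun n i g"
      using zero_eigfun_eigen[of "fst i" n "snd i" g] by (cases i) auto
  next
    fix i j assume "i \<in> ?I" "j \<in> ?I"
    then show "((\<Sum>g\<in>Sym n. zero_dual n i g * zero_eigfun n j g) \<noteq> 0) = (i = j)"
      using zero_dual_separates[OF n, of "fst i" "snd i" "fst j" "snd j"] by (cases i, cases j) auto
  qed simp
  moreover have "card ?I = (n - 2) * (n - 2)" by (simp add: card_cartesian_product numeral_2_eq_2)
  ultimately show ?thesis using choose_two_le_square[of n] by linarith
qed

theorem theorem1:
  fixes n :: nat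
  assumes "n \<ge> 2"
  shows "(\<forall>l. 1 \<le> l \<and> l \<le> n - 1 \<longrightarrow>
            eigenvalue (cayley_adj_mat (Sym n) (star_transp n)) (real (n - l)) \<and>
            eig_mult (cayley_adj_mat (Sym n) (star_transp n)) (real (n - l)) \<ge> (n - 2) choose (l - 1) \<and>
            eigenvalue (cayley_adj_mat (Sym n) (star_transp n)) (- real (n - l)) \<and>
            eig_mult (cayley_adj_mat (Sym n) (star_transp n)) (- real (n - l)) \<ge> (n - 2) choose (l - 1))
         \<and> (n \<ge> 4 \<longrightarrow>
            eigenvalue (cayley_adj_mat (Sym n) (star_transp n)) 0 \<and>
            eig_mult (cayley_adj_mat (Sym n) (star_transp n)) 0 \<ge> (n - 1) choose 2)"
proof (intro conjI allI impI)
  fix l assume l: "1 \<le> l \<and> l \<le> n - 1"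
  then have "0 < (n - 2) choose (l - 1)" by (intro zero_less_binomial) arith
  then have pos: "1 \<le> (n - 2) choose (l - 1)" by linarith
  show "eig_mult (cayley_adj_mat (Sym n) (star_transp n)) (real (n - l)) \<ge> (n - 2) choose (l - 1)"
    and "eig_mult (cayley_adj_mat (Sym n) (star_transp n)) (- real (n - l)) \<ge> (n - 2) choose (l - 1)"
    using eig_mult_plus_minus l by auto
  then show "eigenvalue (cayley_adj_mat (Sym n) (star_transp n)) (real (n - l))"
    and "eigenvalue (cayley_adj_mat (Sym n) (star_transp n)) (- real (n - l))"
    using pos by (auto intro: cayley_eigenvalue_if_mult_pos)
next
  assume n: "n \<ge> 4"
  then show mult: "eig_mult (cayley_adj_mat (Sym n) (star_transp n)) 0 \<ge> (n - 1) choose 2"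
    by (rule eig_mult_zero)
  have "0 < (n - 1) choose 2" using n by (intro zero_less_binomial) simp
  then have "1 \<le> (n - 1) choose 2" by linarith
  then show "eigenvalue (cayley_adj_mat (Sym n) (star_transp n)) 0"
    using mult by (auto intro: cayley_eigenvalue_if_mult_pos)
qed

end
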